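(* Let $d\ge2$ and let $(\tau_e)_{e\in\mathbb{E}^d}$ be i.i.d. nonnegative edge weights on $\mathbb{Z}^d$. Let $0<a<b$ be such that for every $\delta>0$, $\mathbb{P}(\tau_e\in[a-\delta,a])>0$ and $\mathbb{P}(\tau_e\in[b,2b])>0$. Let $\epsilon<(b-a)/(2b+3a)$ and let $n,m_1,m_2,m_3$ be positive integers with $$1\le m_2\le\epsilon m_3\le\epsilon^2m_1\le\epsilon^3 n.$$ Then for any $\delta>0$, on the event $E_n$ we have $$T_{\Lambda(n)}(-n\mathbf{e}_1,y)\le a(n+2m_3)+am_2\quad\text{for all }y\in\hat R,$$ and $$T_{\Lambda(n)}(x,0)\ge(a-\delta)(n+2m_3)+bm_2\quad\text{for all }x\in\mathbb{Z}^d\text{ with }\|x\|_1=n.$$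
   Context: $\mathbf{e}_i$ is the $i$-th coordinate vector. $\Lambda(n)=\{x\in\mathbb{Z}^d:\|x\|_1\le n\}$. $R=R(m_1,m_2,m_3)=\{x\in\mathbb{Z}^d:-m_1\le x\cdot\mathbf{e}_1\le m_2,\ \sum_{i=2}^d|x\cdot\mathbf{e}_i|\le m_3\}$, and $\hat R=\{x\in R:\exists y\in\mathbb{Z}^d\setminus R\text{ with }\|x-y\|_1=1\}$. $L=\{k\mathbf{e}_1:k=-n,\dots,-m_1\}$. $E_n$ (which depends on $a,b,\delta,n,m_1,m_2,m_3$) is the event that (1) $\tau_e\in[a-\delta,a]$ for all edges $e=\{x,y\}$ with $x,y\in\hat R\cup L$, and (2) $\tau_e\in[b,2b]$ for all other edges $e=\{x,y\}$ with $x,y\in\Lambda(n)$. $T_{\Lambda(n)}(x,y)$ is the infimum of $\sum_{e\in\gamma}\tau_e$ over nearest-neighbor paths $\gamma$ from $x$ to $y$ all of whose vertices lie in $\Lambda(n)$. *)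

theory Defs
  imports Complex_Main
begin

text \<open>Points of Z^d are functions nat => int vanishing at coordinates >= d;
  coordinate 0 plays the role of e_1.  Edges are unordered pairs {x,y}.\<close>

type_synonym pt = "nat \<Rightarrow> int"

definition Zd :: "nat \<Rightarrow> pt set" where
  "Zd d = {x. \<forall>i\<ge>d. x i = 0}"

definition norm1 :: "nat \<Rightarrow> pt \<Rightarrow> int" where
  "norm1 d x = (\<Sum>i<d. \<bar>x i\<bar>)"

definition unitv :: "nat \<Rightarrow> pt" where
  "unitv i = (\<lambda>j. if j = i then 1 else 0)"

definition adj :: "nat \<Rightarrow> pt \<Rightarrow> pt \<Rightarrow> bool" where
  "adj d x y \<longleftrightarrow> x \<in> Zd d \<and> y \<in> Zd d \<and> norm1 d (\<lambda>i. x i - y i) = 1"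

definition edges :: "nat \<Rightarrow> pt set set" where
  "edges d = {{x, y} | x y. adj d x y}"

definition Lambda :: "nat \<Rightarrow> int \<Rightarrow> pt set" where
  "Lambda d n = {x \<in> Zd d. norm1 d x \<le> n}"

definition Rbox :: "nat \<Rightarrow> int \<Rightarrow> int \<Rightarrow> int \<Rightarrow> pt set" where
  "Rbox d m1 m2 m3 = {x \<in> Zd d. - m1 \<le> x 0 \<and> x 0 \<le> m2 \<and> (\<Sum>i\<in>{1..<d}. \<bar>x i\<bar>) \<le> m3}"

definition Rhat :: "nat \<Rightarrow> int \<Rightarrow> int \<Rightarrow> int \<Rightarrow> pt set" where
  "Rhat d m1 m2 m3 = {x \<in> Rbox d m1 m2 m3.
      \<exists>y \<in> Zd d - Rbox d m1 m2 m3. norm1 d (\<lambda>i. x i - y i) = 1}"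

definition Lseg :: "int \<Rightarrow> int \<Rightarrow> pt set" where
  "Lseg n m1 = {(\<lambda>i. k * unitv 0 i) | k. - n \<le> k \<and> k \<le> - m1}"

definition is_path_in :: "nat \<Rightarrow> pt set \<Rightarrow> pt \<Rightarrow> pt \<Rightarrow> pt list \<Rightarrow> bool" where
  "is_path_in d A x y p \<longleftrightarrow> p \<noteq> [] \<and> hd p = x \<and> last p = y \<and> set p \<subseteq> A
     \<and> (\<forall>i. Suc i < length p \<longrightarrow> adj d (p ! i) (p ! Suc i))"

definition path_weight :: "(pt set \<Rightarrow> real) \<Rightarrow> pt list \<Rightarrow> real" where
  "path_weight \<tau> p = (\<Sum>i<length p - 1. \<tau> {p ! i, p ! Suc i})"

definition passage_time :: "nat \<Rightarrow> (pt set \<Rightarrow> real) \<Rightarrow> pt set \<Rightarrow> pt \<Rightarrow> pt \<Rightarrow> real" where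
  "passage_time d \<tau> A x y = Inf {path_weight \<tau> p | p. is_path_in d A x y p}"

definition event_E :: "nat \<Rightarrow> real \<Rightarrow> real \<Rightarrow> real \<Rightarrow> int \<Rightarrow> int \<Rightarrow> int \<Rightarrow> int
    \<Rightarrow> (pt set \<Rightarrow> real) \<Rightarrow> bool" where
  "event_E d a b \<delta> n m1 m2 m3 \<tau> \<longleftrightarrow>
     (\<forall>x y. adj d x y \<longrightarrow> x \<in> Rhat d m1 m2 m3 \<union> Lseg n m1 \<longrightarrow> y \<in> Rhat d m1 m2 m3 \<union> Lseg n m1
        \<longrightarrow> a - \<delta> \<le> \<tau> {x, y} \<and> \<tau> {x, y} \<le> a)
   \<and> (\<forall>x y. adj d x y \<longrightarrow> x \<in> Lambda d n \<longrightarrow> y \<in> Lambda d n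
        \<longrightarrow> \<not> (x \<in> Rhat d m1 m2 m3 \<union> Lseg n m1 \<and> y \<in> Rhat d m1 m2 m3 \<union> Lseg n m1)
        \<longrightarrow> b \<le> \<tau> {x, y} \<and> \<tau> {x, y} \<le> 2 * b)"

end

theory Submission
  imports Defs
begin

(*
  Upper bound: from -n e_1 walk along L to -m_1 e_1, climb the face x_1 = -m_1 of R until the
  transverse norm s = sum_{i>=2} |x_i| reaches m_3, cross the face s = m_3 to the first coordinate
  of y and descend to y.  Every edge of this path joins two points of Rhat u L, so it weighs at
  most a, and there are at most n + 2 m_3 + m_2 edges.

  Lower bound: reduce a vertex x to (t, s) = (x_1, s).  An edge moves (t, s) by at most one unit
  in l^1, and the edges that may weigh less than b project onto the sides t = -m_1, t = m_2,
  s = m_3 of the rectangle [-m_1, m_2] x [0, m_3] and onto the ray s = 0, t <= -m_1.  Hence a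
  potential Phi(t, s) that grows by at most b per step, and by at most c = max (a - delta) 0 per
  step along those sets, satisfies Phi(x) - Phi(0) <= T(x, 0).  A maximum of three piecewise
  linear potentials, one for each kind of starting point, vanishes at the origin, and the
  separation of scales m_2 << m_3 << m_1 << n enforced by epsilon makes it at least
  c (n + 2 m_3) + b m_2 on the sphere |x|_1 = n.
*)

lemma is_path_in_iff:
  "is_path_in d A x y p \<longleftrightarrow>
     p \<noteq> [] \<and> hd p = x \<and> last p = y \<and> set p \<subseteq> A \<and> successively (adj d) p"
  unfolding is_path_in_def successively_conv_nth by blast

lemma is_path_in_mono: "is_path_in d A x y p \<Longrightarrow> A \<subseteq> B \<Longrightarrow> is_path_in d B x y p"
  unfolding is_path_in_def by auto

lemma is_path_in_append:
  assumes "is_path_in d A x y p" "is_path_in d A y z q"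
  shows "is_path_in d A x z (p @ tl q)"
proof -
  obtain q' where q: "q = y # q'" "last (y # q') = z" "set q \<subseteq> A" "successively (adj d) (y # q')"
    using assms(2) unfolding is_path_in_iff by (metis list.collapse)
  have "successively (adj d) (p @ q')"
    using assms(1) q(4) unfolding is_path_in_iff
    by (cases q') (auto simp: successively_append_iff)
  then show ?thesis
    using assms(1) q unfolding is_path_in_iff by (auto simp: last_ConsR)
qed

lemma path_weight_singleton [simp]: "path_weight \<tau> [x] = 0"
  unfolding path_weight_def by simp

lemma path_weight_Cons_Cons [simp]:
  "path_weight \<tau> (x # y # p) = \<tau> {x, y} + path_weight \<tau> (y # p)"
  unfolding path_weight_def by (simp only: length_Cons diff_Suc_1 sum.lessThan_Suc_shift) simp

lemma path_weight_ge_potential_diff: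
  assumes "is_path_in d A x y p"
    and "\<And>u w. u \<in> A \<Longrightarrow> w \<in> A \<Longrightarrow> adj d u w \<Longrightarrow> \<Psi> u - \<Psi> w \<le> \<tau> {u, w}"
  shows "\<Psi> x - \<Psi> y \<le> path_weight \<tau> p"
proof -
  have "\<Psi> (hd p) - \<Psi> (last p) \<le> path_weight \<tau> p"
    if "p \<noteq> []" "set p \<subseteq> A" "successively (adj d) p" for p
    using that
  proof (induction p rule: induct_list012)
    case (3 u w p)
    then have "\<Psi> w - \<Psi> (last (w # p)) \<le> path_weight \<tau> (w # p)" "\<Psi> u - \<Psi> w \<le> \<tau> {u, w}"
      using assms(2) by auto
    then show ?case by simp
  qed simp_all
  then show ?thesis using assms(1) unfolding is_path_in_iff by blast
qed

lemma path_weight_le_edge_bound: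
  assumes "successively (adj d) p" "set p \<subseteq> B"
    and "\<And>u w. u \<in> B \<Longrightarrow> w \<in> B \<Longrightarrow> adj d u w \<Longrightarrow> \<tau> {u, w} \<le> a"
  shows "path_weight \<tau> p \<le> a * (length p - 1)"
proof -
  have "path_weight \<tau> p \<le> (\<Sum>i<length p - 1. a)"
    unfolding path_weight_def
  proof (rule sum_mono)
    fix i assume "i \<in> {..<length p - 1}"
    then have "Suc i < length p" by auto
    moreover have "p ! i \<in> B" "p ! Suc i \<in> B"
      using \<open>Suc i < length p\<close> assms(2) by (auto dest: nth_mem[of _ p])
    ultimately show "\<tau> {p ! i, p ! Suc i} \<le> a"
      using assms(3) successively_nth[OF assms(1)] by blast
  qed
  then show ?thesis by (simp add: mult.commute)
qed

lemma path_weight_nonneg: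
  assumes "successively (adj d) p" "\<forall>e \<in> edges d. \<tau> e \<ge> 0"
  shows "path_weight \<tau> p \<ge> 0"
  unfolding path_weight_def
proof (rule sum_nonneg)
  fix i assume "i \<in> {..<length p - 1}"
  then have "adj d (p ! i) (p ! Suc i)" using successively_nth[OF assms(1)] by auto
  then show "\<tau> {p ! i, p ! Suc i} \<ge> 0" using assms(2) unfolding edges_def by blast
qed

lemma passage_time_le_path_weight:
  assumes "\<forall>e \<in> edges d. \<tau> e \<ge> 0" "is_path_in d A x y p"
  shows "passage_time d \<tau> A x y \<le> path_weight \<tau> p"
  unfolding passage_time_def
proof (rule cInf_lower)
  show "bdd_below {path_weight \<tau> p | p. is_path_in d A x y p}"
    using path_weight_nonneg assms(1) unfolding is_path_in_iff by (intro bdd_belowI[of _ 0]) blast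
qed (use assms(2) in blast)

lemma passage_time_ge:
  assumes "is_path_in d A x y p" "\<And>q. is_path_in d A x y q \<Longrightarrow> T \<le> path_weight \<tau> q"
  shows "T \<le> passage_time d \<tau> A x y"
  unfolding passage_time_def using assms by (intro cInf_greatest) auto

lemma sum_fun_upd:
  fixes f :: "'a \<Rightarrow> 'b::ab_group_add"
  assumes "finite A" "i \<in> A"
  shows "sum (f(i := v)) A = sum f A - f i + v"
  using assms by (simp add: sum.remove[of A i] sum.cong[of "A - {i}" _ "f(i := v)" f])

lemma norm1_fun_upd: "i < d \<Longrightarrow> norm1 d (f(i := v)) = norm1 d f - \<bar>f i\<bar> + \<bar>v\<bar>"
  unfolding norm1_def using sum_fun_upd[of "{..<d}" i "\<lambda>j. \<bar>f j\<bar>" "\<bar>v\<bar>"]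
  by (simp add: fun_upd_def if_distrib)

lemma norm1_nonneg: "norm1 d x \<ge> 0"
  unfolding norm1_def by (simp add: sum_nonneg)

lemma norm1_zero: "norm1 d (\<lambda>_. 0) = 0"
  unfolding norm1_def by simp

lemma norm1_diff_fun_upd: "j < d \<Longrightarrow> norm1 d (\<lambda>i. x i - (x(j := v)) i) = \<bar>x j - v\<bar>"
proof -
  assume "j < d"
  have "(\<lambda>i. x i - (x(j := v)) i) = (\<lambda>_. 0)(j := x j - v)" by auto
  then show ?thesis using \<open>j < d\<close> by (simp add: norm1_fun_upd norm1_zero)
qed

lemma norm1_eq_0_imp_eq:
  assumes "x \<in> Zd d" "y \<in> Zd d" "norm1 d (\<lambda>i. x i - y i) = 0"
  shows "x = y"
proof
  fix i
  show "x i = y i"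
  proof (cases "i < d")
    case True
    then show ?thesis
      using assms(3) unfolding norm1_def by (subst (asm) sum_nonneg_eq_0_iff) auto
  next
    case False
    then show ?thesis using assms(1,2) unfolding Zd_def by auto
  qed
qed

definition lattice_box :: "nat \<Rightarrow> pt \<Rightarrow> pt \<Rightarrow> pt set" where
  "lattice_box d x y = {z \<in> Zd d. \<forall>i. min (x i) (y i) \<le> z i \<and> z i \<le> max (x i) (y i)}"

lemma lattice_box_bounds:
  "z \<in> lattice_box d x y \<Longrightarrow> min (x i) (y i) \<le> z i \<and> z i \<le> max (x i) (y i)"
  unfolding lattice_box_def by blast

lemma lattice_box_coord_eq: "z \<in> lattice_box d x y \<Longrightarrow> x i = y i \<Longrightarrow> z i = x i"
  using lattice_box_bounds[of z d x y i] by simp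

lemma lattice_box_abs_le: "z \<in> lattice_box d x y \<Longrightarrow> \<bar>z i\<bar> \<le> max \<bar>x i\<bar> \<bar>y i\<bar>"
  using lattice_box_bounds[of z d x y i] by linarith

lemma step_towards:
  assumes "x \<in> Zd d" "y \<in> Zd d" "i < d" "x i \<noteq> y i"
  defines "x' \<equiv> x(i := x i + sgn (y i - x i))"
  shows "x' \<in> Zd d" "adj d x x'"
    and "norm1 d (\<lambda>j. x' j - y j) = norm1 d (\<lambda>j. x j - y j) - 1"
    and "lattice_box d x' y \<subseteq> lattice_box d x y"
proof -
  show "x' \<in> Zd d" using assms unfolding Zd_def x'_def by auto
  have "norm1 d (\<lambda>j. x j - x' j) = 1"
    using assms(4) unfolding x'_def norm1_diff_fun_upd[OF assms(3)] by (simp add: abs_sgn_eq)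
  then show "adj d x x'" using \<open>x' \<in> Zd d\<close> assms(1) unfolding adj_def by simp
  have "(\<lambda>j. x' j - y j) = (\<lambda>j. x j - y j)(i := x i + sgn (y i - x i) - y i)"
    unfolding x'_def by auto
  then show "norm1 d (\<lambda>j. x' j - y j) = norm1 d (\<lambda>j. x j - y j) - 1"
    using assms(3,4) by (auto simp: norm1_fun_upd sgn_if)
  have shrink: "min (x j) (y j) \<le> min (x' j) (y j) \<and> max (x' j) (y j) \<le> max (x j) (y j)" for j
  proof (cases "j = i")
    case True
    then show ?thesis using assms(4) unfolding x'_def by (simp add: sgn_if)
  qed (simp add: x'_def)
  show "lattice_box d x' y \<subseteq> lattice_box d x y"
  proof
    fix z assume z: "z \<in> lattice_box d x' y"
    have "min (x j) (y j) \<le> z j \<and> z j \<le> max (x j) (y j)" for j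
      using z shrink[of j] unfolding lattice_box_def by (blast intro: order_trans)
    then show "z \<in> lattice_box d x y" using z unfolding lattice_box_def by blast
  qed
qed

lemma monotone_path_exists:
  assumes "x \<in> Zd d" "y \<in> Zd d"
  shows "\<exists>p. is_path_in d (lattice_box d x y) x y p \<and> int (length p) = norm1 d (\<lambda>i. x i - y i) + 1"
proof -
  have "\<exists>p. is_path_in d (lattice_box d x y) x y p \<and> length p = k + 1"
    if "x \<in> Zd d" "nat (norm1 d (\<lambda>i. x i - y i)) = k" for k x
    using that
  proof (induction k arbitrary: x)
    case 0
    then have "x = y"
      using norm1_eq_0_imp_eq assms(2) norm1_nonneg[of d "\<lambda>i. x i - y i"] by simp
    then show ?case
      using 0 by (intro exI[of _ "[x]"]) (auto simp: is_path_in_iff lattice_box_def)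
  next
    case (Suc k)
    have "\<exists>i<d. x i \<noteq> y i"
    proof (rule ccontr)
      assume "\<not> (\<exists>i<d. x i \<noteq> y i)"
      then have "norm1 d (\<lambda>i. x i - y i) = 0" unfolding norm1_def by simp
      then show False using Suc.prems(2) by simp
    qed
    then obtain i where i: "i < d" "x i \<noteq> y i" by blast
    define x' where "x' = x(i := x i + sgn (y i - x i))"
    note step = step_towards[OF Suc.prems(1) assms(2) i, folded x'_def]
    obtain p where p: "is_path_in d (lattice_box d x' y) x' y p" "length p = k + 1"
      using Suc.IH[OF step(1)] step(3) Suc.prems(2) by fastforce
    have "x \<in> lattice_box d x y" using Suc.prems(1) unfolding lattice_box_def by auto
    then have "is_path_in d (lattice_box d x y) x y (x # p)"
      using p(1) step(2,4) unfolding is_path_in_iff by (cases p) auto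
    then show ?case using p(2) by auto
  qed
  then show ?thesis using assms(1) norm1_nonneg[of d "\<lambda>i. x i - y i"] by fastforce
qed

definition reachable_within :: "nat \<Rightarrow> pt set \<Rightarrow> pt \<Rightarrow> pt \<Rightarrow> int \<Rightarrow> bool" where
  "reachable_within d S x y k \<longleftrightarrow> (\<exists>p. is_path_in d S x y p \<and> int (length p) \<le> k + 1)"

lemma reachable_within_trans:
  "reachable_within d S x y k \<Longrightarrow> reachable_within d S y z l \<Longrightarrow> reachable_within d S x z (k + l)"
  unfolding reachable_within_def
proof (elim exE conjE)
  fix p q assume "is_path_in d S x y p" "is_path_in d S y z q"
    "int (length p) \<le> k + 1" "int (length q) \<le> l + 1"
  moreover have "q \<noteq> []" using \<open>is_path_in d S y z q\<close> unfolding is_path_in_def by simp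
  moreover have "is_path_in d S x z (p @ tl q)" using calculation(1,2) by (rule is_path_in_append)
  ultimately show "\<exists>r. is_path_in d S x z r \<and> int (length r) \<le> k + l + 1"
    by (intro exI[of _ "p @ tl q"]) (cases q; auto)
qed

lemma reachable_within_lattice_box:
  assumes "x \<in> Zd d" "y \<in> Zd d" "lattice_box d x y \<subseteq> S"
  shows "reachable_within d S x y (norm1 d (\<lambda>i. x i - y i))"
  using monotone_path_exists[OF assms(1,2)] is_path_in_mono[OF _ assms(3)]
  unfolding reachable_within_def by fastforce

lemma passage_time_le_reachable:
  assumes "\<forall>e \<in> edges d. \<tau> e \<ge> 0" "reachable_within d S x y k" "S \<subseteq> A" "0 \<le> a"
    and "\<And>u w. u \<in> S \<Longrightarrow> w \<in> S \<Longrightarrow> adj d u w \<Longrightarrow> \<tau> {u, w} \<le> a"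
  shows "passage_time d \<tau> A x y \<le> a * k"
proof -
  obtain p where p: "is_path_in d S x y p" "int (length p) \<le> k + 1"
    using assms(2) unfolding reachable_within_def by blast
  have "passage_time d \<tau> A x y \<le> path_weight \<tau> p"
    using passage_time_le_path_weight[OF assms(1) is_path_in_mono[OF p(1) assms(3)]] .
  also have "\<dots> \<le> a * (length p - 1)"
    using p(1) assms(5) unfolding is_path_in_iff by (intro path_weight_le_edge_bound) auto
  also have "\<dots> \<le> a * k"
  proof -
    have "p \<noteq> []" using p(1) unfolding is_path_in_iff by simp
    then have "int (length p - 1) \<le> k" using p(2) by (cases p) auto
    then have "real (length p - 1) \<le> real_of_int k" by (metis of_int_le_iff of_int_of_nat_eq)
    then show ?thesis using assms(4) by (rule mult_left_mono)
  qed
  finally show ?thesis .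
qed

lemma reachable_within_mono: "reachable_within d S x y k \<Longrightarrow> S \<subseteq> S' \<Longrightarrow> reachable_within d S' x y k"
  unfolding reachable_within_def using is_path_in_mono by blast

lemma reachable_within_le: "reachable_within d S x y k \<Longrightarrow> k \<le> l \<Longrightarrow> reachable_within d S x y l"
  unfolding reachable_within_def by fastforce

definition transverse_norm :: "nat \<Rightarrow> pt \<Rightarrow> int" where
  "transverse_norm d x = (\<Sum>i\<in>{1..<d}. \<bar>x i\<bar>)"

lemma transverse_norm_nonneg: "transverse_norm d x \<ge> 0"
  unfolding transverse_norm_def by (simp add: sum_nonneg)

lemma transverse_norm_fun_upd_0 [simp]: "transverse_norm d (x(0 := v)) = transverse_norm d x"
  unfolding transverse_norm_def by (intro sum.cong) auto

lemma transverse_norm_fun_upd: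
  "i \<in> {1..<d} \<Longrightarrow> transverse_norm d (x(i := v)) = transverse_norm d x - \<bar>x i\<bar> + \<bar>v\<bar>"
  unfolding transverse_norm_def using sum_fun_upd[of "{1..<d}" i "\<lambda>j. \<bar>x j\<bar>" "\<bar>v\<bar>"]
  by (simp add: fun_upd_def if_distrib)

lemma norm1_eq_abs_plus_transverse_norm: "1 \<le> d \<Longrightarrow> norm1 d x = \<bar>x 0\<bar> + transverse_norm d x"
proof -
  assume "1 \<le> d"
  then have "{..<d} = insert 0 {1..<d}" by auto
  then show ?thesis unfolding norm1_def transverse_norm_def by simp
qed

lemma adj_reduced_step:
  assumes "1 \<le> d" "adj d u w"
  shows "\<bar>u 0 - w 0\<bar> + \<bar>transverse_norm d u - transverse_norm d w\<bar> \<le> 1"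
proof -
  have "\<bar>transverse_norm d u - transverse_norm d w\<bar> \<le> (\<Sum>i\<in>{1..<d}. \<bar>\<bar>u i\<bar> - \<bar>w i\<bar>\<bar>)"
    unfolding transverse_norm_def sum_subtractf[symmetric] by (rule sum_abs)
  also have "\<dots> \<le> transverse_norm d (\<lambda>i. u i - w i)"
    unfolding transverse_norm_def by (intro sum_mono abs_triangle_ineq3)
  finally show ?thesis
    using assms norm1_eq_abs_plus_transverse_norm[of d "\<lambda>i. u i - w i"] unfolding adj_def by simp
qed

lemma Rbox_iff:
  "x \<in> Rbox d m1 m2 m3 \<longleftrightarrow> x \<in> Zd d \<and> - m1 \<le> x 0 \<and> x 0 \<le> m2 \<and> transverse_norm d x \<le> m3"
  unfolding Rbox_def transverse_norm_def by simp

lemma face_point_has_neighbour_outside_Rbox: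
  assumes "2 \<le> d" "x \<in> Zd d" "x 0 = - m1 \<or> x 0 = m2 \<or> transverse_norm d x = m3"
  shows "\<exists>y \<in> Zd d - Rbox d m1 m2 m3. norm1 d (\<lambda>i. x i - y i) = 1"
proof -
  obtain j v where j: "j < d" "x(j := v) \<notin> Rbox d m1 m2 m3" "\<bar>x j - v\<bar> = 1"
  proof -
    consider "x 0 = - m1" | "x 0 = m2" | "transverse_norm d x = m3" using assms(3) by blast
    then show thesis
    proof cases
      case 1
      then show ?thesis using that[of 0 "- m1 - 1"] assms(1) by (auto simp: Rbox_iff)
    next
      case 2
      then show ?thesis using that[of 0 "m2 + 1"] assms(1) by (auto simp: Rbox_iff)
    next
      case 3
      define v where "v = x 1 + (if 0 \<le> x 1 then 1 else - 1)"
      have "transverse_norm d (x(1 := v)) = m3 + 1"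
        using 3 assms(1) transverse_norm_fun_upd[of 1 d x v] unfolding v_def by auto
      then show ?thesis using that[of 1 v] assms(1) unfolding v_def by (auto simp: Rbox_iff)
    qed
  qed
  moreover have "x(j := v) \<in> Zd d" using assms(2) j(1) unfolding Zd_def by auto
  moreover have "norm1 d (\<lambda>i. x i - (x(j := v)) i) = 1"
    using norm1_diff_fun_upd[OF j(1)] j(3) by presburger
  ultimately show ?thesis by blast
qed

lemma Rhat_iff:
  assumes "2 \<le> d"
  shows "x \<in> Rhat d m1 m2 m3 \<longleftrightarrow> x \<in> Zd d \<and> - m1 \<le> x 0 \<and> x 0 \<le> m2 \<and> transverse_norm d x \<le> m3
           \<and> (x 0 = - m1 \<or> x 0 = m2 \<or> transverse_norm d x = m3)"
proof -
  have "x 0 = - m1 \<or> x 0 = m2 \<or> transverse_norm d x = m3"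
    if "x \<in> Rbox d m1 m2 m3" "y \<in> Zd d - Rbox d m1 m2 m3" "norm1 d (\<lambda>i. x i - y i) = 1" for y
  proof -
    have "adj d x y" using that unfolding adj_def Rbox_iff by blast
    moreover have "\<not> (- m1 \<le> y 0 \<and> y 0 \<le> m2 \<and> transverse_norm d y \<le> m3)"
      using that(2) Rbox_iff[of y d m1 m2 m3] by blast
    ultimately show ?thesis using that(1) adj_reduced_step[of d x y] assms unfolding Rbox_iff by auto
  qed
  then show ?thesis
    unfolding Rhat_def using face_point_has_neighbour_outside_Rbox[OF assms] Rbox_iff by blast
qed

lemma Lseg_iff:
  assumes "1 \<le> d"
  shows "x \<in> Lseg n m1 \<longleftrightarrow> (\<forall>i. i \<noteq> 0 \<longrightarrow> x i = 0) \<and> - n \<le> x 0 \<and> x 0 \<le> - m1"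
proof -
  have "x = (\<lambda>i. k * unitv 0 i) \<longleftrightarrow> (\<forall>i. i \<noteq> 0 \<longrightarrow> x i = 0) \<and> x 0 = k" for k
    unfolding unitv_def by auto
  then show ?thesis unfolding Lseg_def by auto
qed

lemma Lseg_reduced:
  assumes "1 \<le> d" "x \<in> Lseg n m1"
  shows "x \<in> Zd d" "x 0 \<le> - m1" "transverse_norm d x = 0"
  using assms unfolding Lseg_iff[OF assms(1)] Zd_def transverse_norm_def by auto

lemma transverse_norm_cong:
  "(\<And>i. 1 \<le> i \<Longrightarrow> i < d \<Longrightarrow> x i = y i) \<Longrightarrow> transverse_norm d x = transverse_norm d y"
  unfolding transverse_norm_def by (intro sum.cong) auto

lemma event_E_fast_edge:
  assumes "event_E d a b \<delta> n m1 m2 m3 \<tau>" "adj d u w"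
    and "u \<in> Rhat d m1 m2 m3 \<union> Lseg n m1" "w \<in> Rhat d m1 m2 m3 \<union> Lseg n m1"
  shows "a - \<delta> \<le> \<tau> {u, w}" "\<tau> {u, w} \<le> a"
  using conjunct1[OF assms(1)[unfolded event_E_def]] assms(2-4) by blast+

lemma event_E_slow_edge:
  assumes "event_E d a b \<delta> n m1 m2 m3 \<tau>" "adj d u w" "u \<in> Lambda d n" "w \<in> Lambda d n"
    and "\<not> (u \<in> Rhat d m1 m2 m3 \<union> Lseg n m1 \<and> w \<in> Rhat d m1 m2 m3 \<union> Lseg n m1)"
  shows "b \<le> \<tau> {u, w}"
  using conjunct2[OF assms(1)[unfolded event_E_def]] assms(2-5) by blast

lemma axis_point_in_Zd: "1 \<le> d \<Longrightarrow> (\<lambda>i. k * unitv 0 i) \<in> Zd d"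
  unfolding Zd_def unitv_def by auto

lemma reachable_along_axis:
  assumes "1 \<le> d" "m1 \<le> n"
  shows "reachable_within d (Lseg n m1) (\<lambda>i. - n * unitv 0 i) (\<lambda>i. - m1 * unitv 0 i) (n - m1)"
proof -
  let ?q0 = "\<lambda>i. - n * unitv 0 i" and ?q1 = "\<lambda>i. - m1 * unitv 0 i"
  have norm: "norm1 d (\<lambda>i. ?q0 i - ?q1 i) = n - m1"
    using assms transverse_norm_cong[of d "\<lambda>i. ?q0 i - ?q1 i" "\<lambda>_. 0"]
    by (simp add: norm1_eq_abs_plus_transverse_norm unitv_def transverse_norm_def)
  have box: "lattice_box d ?q0 ?q1 \<subseteq> Lseg n m1"
  proof
    fix z assume z: "z \<in> lattice_box d ?q0 ?q1"
    have "z i = 0" if "i \<noteq> 0" for i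
      using lattice_box_coord_eq[OF z, of i] that by (simp add: unitv_def)
    moreover have "- n \<le> z 0" "z 0 \<le> - m1"
      using lattice_box_bounds[OF z, of 0] assms(2) by (simp_all add: unitv_def)
    ultimately show "z \<in> Lseg n m1" using Lseg_iff[OF assms(1)] by blast
  qed
  show ?thesis
    using reachable_within_lattice_box[OF axis_point_in_Zd[OF assms(1)] axis_point_in_Zd[OF assms(1)] box]
    by (simp only: norm)
qed

lemma reachable_on_left_face:
  assumes "2 \<le> d" "- m1 \<le> m2" "w \<in> Zd d" "w 0 = - m1" "transverse_norm d w = m3"
  shows "reachable_within d (Rhat d m1 m2 m3) (\<lambda>i. - m1 * unitv 0 i) w m3"
proof -
  let ?q = "\<lambda>i. - m1 * unitv 0 i"
  have "transverse_norm d (\<lambda>i. ?q i - w i) = transverse_norm d w"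
    unfolding transverse_norm_def by (intro sum.cong) (auto simp: unitv_def)
  then have norm: "norm1 d (\<lambda>i. ?q i - w i) = m3"
    using assms by (simp add: norm1_eq_abs_plus_transverse_norm unitv_def)
  have box: "lattice_box d ?q w \<subseteq> Rhat d m1 m2 m3"
  proof
    fix z assume z: "z \<in> lattice_box d ?q w"
    have "z 0 = - m1" using lattice_box_coord_eq[OF z, of 0] assms(4) by (simp add: unitv_def)
    moreover have "transverse_norm d z \<le> transverse_norm d w"
      unfolding transverse_norm_def
    proof (rule sum_mono)
      fix i assume "i \<in> {1..<d}"
      then show "\<bar>z i\<bar> \<le> \<bar>w i\<bar>" using lattice_box_abs_le[OF z, of i] by (simp add: unitv_def)
    qed
    ultimately show "z \<in> Rhat d m1 m2 m3"
      using z assms Rhat_iff[OF assms(1)] unfolding lattice_box_def by auto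
  qed
  show ?thesis
    using reachable_within_lattice_box[OF axis_point_in_Zd assms(3) box] assms(1) by (simp only: norm)
qed

lemma reachable_on_top_face:
  assumes "2 \<le> d" "w \<in> Zd d" "transverse_norm d w = m3" "- m1 \<le> w 0" "w 0 \<le> m2" "- m1 \<le> v" "v \<le> m2"
  shows "reachable_within d (Rhat d m1 m2 m3) w (w(0 := v)) \<bar>w 0 - v\<bar>"
proof -
  have "w(0 := v) \<in> Zd d" using assms(1,2) unfolding Zd_def by auto
  have box: "lattice_box d w (w(0 := v)) \<subseteq> Rhat d m1 m2 m3"
  proof
    fix z assume z: "z \<in> lattice_box d w (w(0 := v))"
    have "transverse_norm d z = m3"
      using lattice_box_coord_eq[OF z] transverse_norm_cong[of d z w] assms(3) by simp
    moreover have "- m1 \<le> z 0" "z 0 \<le> m2"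
      using lattice_box_bounds[OF z, of 0] assms(4-7) by auto
    ultimately show "z \<in> Rhat d m1 m2 m3"
      using z Rhat_iff[OF assms(1)] unfolding lattice_box_def by auto
  qed
  have "norm1 d (\<lambda>i. w i - (w(0 := v)) i) = \<bar>w 0 - v\<bar>"
    using assms(1) by (intro norm1_diff_fun_upd) simp
  then show ?thesis
    using reachable_within_lattice_box[OF assms(2) \<open>w(0 := v) \<in> Zd d\<close> box] by (simp only:)
qed

lemma reachable_climb_to_Rhat:
  assumes "2 \<le> d" "y \<in> Rhat d m1 m2 m3"
  defines "k \<equiv> m3 - transverse_norm d y"
  defines "w \<equiv> y(1 := y 1 + (if 0 \<le> y 1 then k else - k))"
  shows "transverse_norm d w = m3" "reachable_within d (Rhat d m1 m2 m3) w y k"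
proof -
  have y: "y \<in> Zd d" "- m1 \<le> y 0" "y 0 \<le> m2" "0 \<le> k"
    "y 0 = - m1 \<or> y 0 = m2 \<or> transverse_norm d y = m3"
    using assms(2) unfolding Rhat_iff[OF assms(1)] k_def by auto
  have d1: "(1::nat) \<in> {1..<d}" using assms(1) by simp
  have "\<bar>w 1\<bar> = \<bar>y 1\<bar> + k" using y(4) unfolding w_def by auto
  then show tw: "transverse_norm d w = m3"
    unfolding w_def using transverse_norm_fun_upd[OF d1] by (simp add: w_def k_def)
  have "w \<in> Zd d" using y(1) assms(1) unfolding w_def Zd_def by auto
  have box: "lattice_box d w y \<subseteq> Rhat d m1 m2 m3"
  proof
    fix z assume z: "z \<in> lattice_box d w y"
    have "z = y(1 := z 1)"
      using lattice_box_coord_eq[OF z] unfolding w_def by (auto split: if_splits)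
    then have tz: "transverse_norm d z = transverse_norm d y - \<bar>y 1\<bar> + \<bar>z 1\<bar>"
      using transverse_norm_fun_upd[OF d1, of y "z 1"] by simp
    have "\<bar>z 1\<bar> \<le> \<bar>y 1\<bar> + k" "k = 0 \<longrightarrow> z 1 = y 1"
      using lattice_box_bounds[OF z, of 1] y(4) unfolding w_def by (auto split: if_splits)
    moreover have "z 0 = y 0" using lattice_box_coord_eq[OF z, of 0] unfolding w_def by simp
    ultimately show "z \<in> Rhat d m1 m2 m3"
      using z y tz unfolding Rhat_iff[OF assms(1)] lattice_box_def k_def by auto
  qed
  have "norm1 d (\<lambda>i. w i - y i) = k"
    using norm1_diff_fun_upd[of 1 d y] assms(1) y(4) unfolding w_def
    by (simp add: abs_minus_commute norm1_def)
  then show "reachable_within d (Rhat d m1 m2 m3) w y k"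
    using reachable_within_lattice_box[OF \<open>w \<in> Zd d\<close> y(1) box] by (simp only:)
qed

lemma fast_set_subset_Lambda:
  assumes "2 \<le> d" "0 \<le> m1" "m2 \<le> m1" "m1 + m3 \<le> n"
  shows "Rhat d m1 m2 m3 \<union> Lseg n m1 \<subseteq> Lambda d n"
proof
  fix x assume x: "x \<in> Rhat d m1 m2 m3 \<union> Lseg n m1"
  have "x \<in> Zd d \<and> \<bar>x 0\<bar> + transverse_norm d x \<le> n"
  proof (cases "x \<in> Rhat d m1 m2 m3")
    case True
    then show ?thesis using assms unfolding Rhat_iff[OF assms(1)] by auto
  next
    case False
    then have "x \<in> Lseg n m1" using x by blast
    then show ?thesis using assms Lseg_reduced[of d x n m1] Lseg_iff[of d x n m1] by auto
  qed
  then show "x \<in> Lambda d n"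
    using norm1_eq_abs_plus_transverse_norm[of d x] assms(1) unfolding Lambda_def by auto
qed

lemma reachable_Rhat_from_axis:
  assumes "2 \<le> d" "m1 \<le> n" "y \<in> Rhat d m1 m2 m3"
  shows "reachable_within d (Rhat d m1 m2 m3 \<union> Lseg n m1) (\<lambda>i. - n * unitv 0 i) y (n + 2 * m3 + m2)"
proof -
  let ?F = "Rhat d m1 m2 m3 \<union> Lseg n m1"
  define k where "k = m3 - transverse_norm d y"
  define w where "w = y(1 := y 1 + (if 0 \<le> y 1 then k else - k))"
  have y: "y \<in> Zd d" "- m1 \<le> y 0" "y 0 \<le> m2"
    using assms(3) unfolding Rhat_iff[OF assms(1)] by auto
  have w: "w \<in> Zd d" "w 0 = y 0" "transverse_norm d w = m3" "w(0 := - m1) \<in> Zd d"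
    using y(1) assms(1) reachable_climb_to_Rhat(1)[OF assms(1,3)]
    unfolding w_def k_def Zd_def by auto
  have axis: "reachable_within d ?F (\<lambda>i. - n * unitv 0 i) (\<lambda>i. - m1 * unitv 0 i) (n - m1)"
    by (rule reachable_within_mono[OF reachable_along_axis]) (use assms(1,2) in auto)
  have left: "reachable_within d ?F (\<lambda>i. - m1 * unitv 0 i) (w(0 := - m1)) m3"
  proof (rule reachable_within_mono)
    show "reachable_within d (Rhat d m1 m2 m3) (\<lambda>i. - m1 * unitv 0 i) (w(0 := - m1)) m3"
      using w y by (intro reachable_on_left_face[OF assms(1)]) auto
  qed blast
  have top: "reachable_within d ?F (w(0 := - m1)) w \<bar>- m1 - y 0\<bar>"
  proof (rule reachable_within_mono)
    have "reachable_within d (Rhat d m1 m2 m3) (w(0 := - m1)) ((w(0 := - m1))(0 := y 0))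
        \<bar>(w(0 := - m1)) 0 - y 0\<bar>"
      using w y by (intro reachable_on_top_face[OF assms(1)]) auto
    then show "reachable_within d (Rhat d m1 m2 m3) (w(0 := - m1)) w \<bar>- m1 - y 0\<bar>"
      using fun_upd_idem[of w 0 "y 0", OF w(2)] by simp
  qed blast
  have climb: "reachable_within d ?F w y k"
    unfolding w_def k_def by (rule reachable_within_mono[OF reachable_climb_to_Rhat(2)[OF assms(1,3)]]) blast
  have "n - m1 + m3 + \<bar>- m1 - y 0\<bar> + k \<le> n + 2 * m3 + m2"
    using y transverse_norm_nonneg[of d y] unfolding k_def by simp
  then show ?thesis
    using reachable_within_trans[OF reachable_within_trans[OF reachable_within_trans[OF axis left] top] climb]
    by (rule reachable_within_le[rotated])
qed

lemma passage_time_to_Rhat_le: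
  assumes "2 \<le> d" "\<forall>e \<in> edges d. \<tau> e \<ge> 0" "0 \<le> a" "0 \<le> m1" "m2 \<le> m1" "m1 + m3 \<le> n"
    and "event_E d a b \<delta> n m1 m2 m3 \<tau>" "y \<in> Rhat d m1 m2 m3"
  shows "passage_time d \<tau> (Lambda d n) (\<lambda>i. - n * unitv 0 i) y \<le> a * (n + 2 * m3) + a * m2"
proof -
  have "0 \<le> m3" using assms(8) transverse_norm_nonneg[of d y] unfolding Rhat_iff[OF assms(1)] by auto
  then have "passage_time d \<tau> (Lambda d n) (\<lambda>i. - n * unitv 0 i) y \<le> a * of_int (n + 2 * m3 + m2)"
    using assms(6) event_E_fast_edge(2)[OF assms(7)]
    by (intro passage_time_le_reachable[OF assms(2) reachable_Rhat_from_axis[OF assms(1) _ assms(8)]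
          fast_set_subset_Lambda[OF assms(1,4,5,6)] assms(3)]) auto
  then show ?thesis by (simp add: algebra_simps)
qed

definition fast_region :: "int \<Rightarrow> int \<Rightarrow> int \<Rightarrow> int \<Rightarrow> int \<Rightarrow> bool" where
  "fast_region m1 m2 m3 t s \<longleftrightarrow>
     (- m1 \<le> t \<and> t \<le> m2 \<and> 0 \<le> s \<and> s \<le> m3 \<and> (t = - m1 \<or> t = m2 \<or> s = m3)) \<or> (s = 0 \<and> t \<le> - m1)"

lemma fast_region_reduced:
  assumes "2 \<le> d" "x \<in> Rhat d m1 m2 m3 \<union> Lseg n m1"
  shows "fast_region m1 m2 m3 (x 0) (transverse_norm d x)"
  using assms Rhat_iff[OF assms(1), of x] Lseg_reduced[of d x n m1] transverse_norm_nonneg[of d x]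
  unfolding fast_region_def by auto

(* Stated over an arbitrary ordered ring so that it transfers (fast_step_of_int) from the
   lattice to the real-valued potentials. *)
definition fast_step :: "'a::linordered_idom \<Rightarrow> 'a \<Rightarrow> 'a \<Rightarrow> 'a \<Rightarrow> 'a \<Rightarrow> 'a \<Rightarrow> 'a \<Rightarrow> bool" where
  "fast_step m1 m2 m3 t1 s1 t2 s2 \<longleftrightarrow>
      (t1 = t2 \<and> \<bar>s1 - s2\<bar> \<le> 1 \<and> (t1 = - m1 \<or> t1 = m2) \<and> 0 \<le> s1 \<and> s1 \<le> m3 \<and> 0 \<le> s2 \<and> s2 \<le> m3)
    \<or> (s1 = m3 \<and> s2 = m3 \<and> \<bar>t1 - t2\<bar> \<le> 1 \<and> - m1 \<le> t1 \<and> t1 \<le> m2 \<and> - m1 \<le> t2 \<and> t2 \<le> m2)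
    \<or> (s1 = 0 \<and> s2 = 0 \<and> \<bar>t1 - t2\<bar> \<le> 1 \<and> t1 \<le> - m1 \<and> t2 \<le> - m1)"

lemma abs_diff_le_1_of_int:
  "\<bar>a - b\<bar> \<le> 1 \<Longrightarrow> \<bar>of_int a - of_int b\<bar> \<le> (1::'a::linordered_idom)"
  by (metis of_int_abs of_int_diff of_int_le_1_iff)

lemma fast_step_of_int:
  "fast_step m1 m2 m3 t1 s1 t2 s2 \<Longrightarrow>
     fast_step (of_int m1) (of_int m2) (of_int m3) (of_int t1) (of_int s1) (of_int t2) (of_int s2 :: 'a::linordered_idom)"
  unfolding fast_step_def
  by (elim disjE conjE) (simp_all add: abs_diff_le_1_of_int flip: of_int_minus)

lemma fast_region_step:
  assumes "1 \<le> m1" "1 \<le> m2"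
    and "fast_region m1 m2 m3 t1 s1" "fast_region m1 m2 m3 t2 s2" "\<bar>t1 - t2\<bar> + \<bar>s1 - s2\<bar> \<le> 1"
  shows "(t1 = t2 \<and> s1 = s2) \<or> fast_step m1 m2 m3 t1 s1 t2 s2"
proof -
  consider "t1 = t2" "s1 = s2" | "t1 = t2" "s1 = s2 + 1" | "t1 = t2" "s2 = s1 + 1"
    | "s1 = s2" "t1 = t2 + 1" | "s1 = s2" "t2 = t1 + 1"
    using assms(5) by arith
  then show ?thesis
    by cases (use assms(1-4) in \<open>auto simp: fast_region_def fast_step_def\<close>)
qed

definition admissible_potential ::
    "real \<Rightarrow> real \<Rightarrow> real \<Rightarrow> real \<Rightarrow> real \<Rightarrow> (real \<Rightarrow> real \<Rightarrow> real) \<Rightarrow> bool" where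
  "admissible_potential b c m1 m2 m3 \<Phi> \<longleftrightarrow>
     (\<forall>t1 s1 t2 s2. \<bar>t1 - t2\<bar> + \<bar>s1 - s2\<bar> \<le> 1 \<longrightarrow> 0 \<le> s1 \<longrightarrow> 0 \<le> s2 \<longrightarrow> \<Phi> t1 s1 - \<Phi> t2 s2 \<le> b)
   \<and> (\<forall>t1 s1 t2 s2. fast_step m1 m2 m3 t1 s1 t2 s2 \<longrightarrow> \<Phi> t1 s1 - \<Phi> t2 s2 \<le> c)"

lemma admissible_potential_max:
  assumes "admissible_potential b c m1 m2 m3 \<Phi>" "admissible_potential b c m1 m2 m3 \<Psi>"
  shows "admissible_potential b c m1 m2 m3 (\<lambda>t s. max (\<Phi> t s) (\<Psi> t s))"
proof -
  have max_diff: "max u v - max u' v' \<le> r" if "u - u' \<le> r" "v - v' \<le> r" for u v u' v' r :: real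
    using that by linarith
  show ?thesis
    using assms unfolding admissible_potential_def by (blast intro: max_diff)
qed

lemma potential_diff_le_path_weight:
  assumes "2 \<le> d" "event_E d a b \<delta> n m1 m2 m3 \<tau>" "\<forall>e \<in> edges d. \<tau> e \<ge> 0"
    and "c \<le> max (a - \<delta>) 0" "1 \<le> m1" "1 \<le> m2"
    and "admissible_potential b c (of_int m1) (of_int m2) (of_int m3) \<Phi>"
    and "is_path_in d (Lambda d n) x y p"
  shows "\<Phi> (x 0) (transverse_norm d x) - \<Phi> (y 0) (transverse_norm d y) \<le> path_weight \<tau> p"
proof (rule path_weight_ge_potential_diff[OF assms(8)])
  fix u w assume "u \<in> Lambda d n" "w \<in> Lambda d n" "adj d u w"
  let ?t = "\<lambda>v. v 0" and ?s = "\<lambda>v. transverse_norm d v"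
  have step: "\<bar>?t u - ?t w\<bar> + \<bar>?s u - ?s w\<bar> \<le> 1"
    using adj_reduced_step[OF _ \<open>adj d u w\<close>] assms(1) by simp
  have "\<tau> {u, w} \<ge> 0" using assms(3) \<open>adj d u w\<close> unfolding edges_def by blast
  show "\<Phi> (?t u) (?s u) - \<Phi> (?t w) (?s w) \<le> \<tau> {u, w}"
  proof (cases "u \<in> Rhat d m1 m2 m3 \<union> Lseg n m1 \<and> w \<in> Rhat d m1 m2 m3 \<union> Lseg n m1")
    case True
    then have "c \<le> \<tau> {u, w}"
      using event_E_fast_edge(1)[OF assms(2) \<open>adj d u w\<close>] assms(4) \<open>\<tau> {u, w} \<ge> 0\<close> by fastforce
    moreover have "(?t u = ?t w \<and> ?s u = ?s w) \<or> fast_step m1 m2 m3 (?t u) (?s u) (?t w) (?s w)"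
      using fast_region_step[OF assms(5,6) _ _ step] fast_region_reduced[OF assms(1)] True by blast
    ultimately show ?thesis
      using assms(7) \<open>\<tau> {u, w} \<ge> 0\<close> fast_step_of_int unfolding admissible_potential_def by fastforce
  next
    case False
    then have "b \<le> \<tau> {u, w}"
      using event_E_slow_edge[OF assms(2) \<open>adj d u w\<close> \<open>u \<in> Lambda d n\<close> \<open>w \<in> Lambda d n\<close>] by blast
    moreover have "\<bar>real_of_int (?t u) - of_int (?t w)\<bar> + \<bar>real_of_int (?s u) - of_int (?s w)\<bar> \<le> 1"
      using step by (simp flip: of_int_abs of_int_diff of_int_add)
    ultimately show ?thesis
      using assms(7) transverse_norm_nonneg[of d] unfolding admissible_potential_def by fastforce
  qed
qed

lemma mult_diff_le: "0 \<le> k \<Longrightarrow> x - y \<le> r \<Longrightarrow> k * x - k * y \<le> k * (r::real)"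
  by (metis mult_left_mono right_diff_distrib)

lemma min_diff_le: "u - u' \<le> r \<Longrightarrow> v - v' \<le> r \<Longrightarrow> min u v - min u' v' \<le> (r::real)"
  by linarith

(* Lower estimates for the cost of reaching the origin from (t, s): potential_off_axis for starts
   with s >= m1, potential_right for t > 0, and for t <= 0 near the axis potential_left, the
   cheapest of going straight, entering through the face t = m2, or following the ray and the
   top face s = m3. *)
definition potential_off_axis :: "real \<Rightarrow> real \<Rightarrow> real \<Rightarrow> real \<Rightarrow> real \<Rightarrow> real" where
  "potential_off_axis b c k t s = c * (\<bar>t\<bar> + s) + (b - c) * min s (max 0 (\<bar>t\<bar> + s - k))"

definition potential_right :: "real \<Rightarrow> real \<Rightarrow> real \<Rightarrow> real" where
  "potential_right b m2 t = b * max 0 (t - m2)"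

definition route_direct :: "real \<Rightarrow> real \<Rightarrow> real \<Rightarrow> real" where
  "route_direct b t s = b * (\<bar>t\<bar> + s)"

definition route_face :: "real \<Rightarrow> real \<Rightarrow> real \<Rightarrow> real \<Rightarrow> real \<Rightarrow> real" where
  "route_face b c m2 t s = b * m2 + c * s + b * \<bar>t - m2\<bar>"

definition route_ray :: "real \<Rightarrow> real \<Rightarrow> real \<Rightarrow> real \<Rightarrow> real \<Rightarrow> real \<Rightarrow> real \<Rightarrow> real" where
  "route_ray b c m1 m2 m3 t s =
     c * (m2 + 2 * m3 - t) + b * m2 + min (c * s) ((b - c) * max 0 (- m1 - t) - c * s)"

definition potential_left :: "real \<Rightarrow> real \<Rightarrow> real \<Rightarrow> real \<Rightarrow> real \<Rightarrow> real \<Rightarrow> real \<Rightarrow> real" where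
  "potential_left b c m1 m2 m3 t s =
     min (route_direct b t s) (min (route_face b c m2 t s) (route_ray b c m1 m2 m3 t s))"

lemma admissible_potential_off_axis:
  assumes "0 \<le> c" "c \<le> b" "0 \<le> m2" "m2 \<le> m1" "0 \<le> m3"
  shows "admissible_potential b c m1 m2 m3 (potential_off_axis b c (m1 + m3))"
  unfolding admissible_potential_def
proof (intro conjI allI impI)
  let ?excess = "\<lambda>t s. min s (max 0 (\<bar>t\<bar> + s - (m1 + m3)))"
  have cdiff: "c * (\<bar>t1\<bar> + s1) - c * (\<bar>t2\<bar> + s2) \<le> c"
    if "\<bar>t1 - t2\<bar> + \<bar>s1 - s2\<bar> \<le> 1" for t1 s1 t2 s2
    using mult_diff_le[OF assms(1), of "\<bar>t1\<bar> + s1" "\<bar>t2\<bar> + s2" 1] that by auto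
  fix t1 s1 t2 s2 :: real
  {
    assume step: "\<bar>t1 - t2\<bar> + \<bar>s1 - s2\<bar> \<le> 1"
    have "\<bar>t1\<bar> - \<bar>t2\<bar> \<le> \<bar>t1 - t2\<bar>" by (rule abs_triangle_ineq2)
    then have "max 0 (\<bar>t1\<bar> + s1 - (m1 + m3)) - max 0 (\<bar>t2\<bar> + s2 - (m1 + m3)) \<le> 1"
      using step by linarith
    then have "?excess t1 s1 - ?excess t2 s2 \<le> 1"
      using step by (intro min_diff_le) linarith+
    from mult_diff_le[OF _ this, of "b - c"]
    have "(b - c) * ?excess t1 s1 - (b - c) * ?excess t2 s2 \<le> b - c"
      using assms(2) by simp
    then show "potential_off_axis b c (m1 + m3) t1 s1 - potential_off_axis b c (m1 + m3) t2 s2 \<le> b"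
      using cdiff[OF step] unfolding potential_off_axis_def by linarith
  next
    assume fast: "fast_step m1 m2 m3 t1 s1 t2 s2"
    then have "?excess t1 s1 = 0" "?excess t2 s2 = 0" "\<bar>t1 - t2\<bar> + \<bar>s1 - s2\<bar> \<le> 1"
      using assms unfolding fast_step_def by auto
    then show "potential_off_axis b c (m1 + m3) t1 s1 - potential_off_axis b c (m1 + m3) t2 s2 \<le> c"
      using cdiff unfolding potential_off_axis_def by simp
  }
qed

lemma admissible_potential_right:
  assumes "0 \<le> c" "c \<le> b" "- m1 \<le> m2"
  shows "admissible_potential b c m1 m2 m3 (\<lambda>t _. potential_right b m2 t)"
  unfolding admissible_potential_def
proof (intro conjI allI impI)
  fix t1 s1 t2 s2 :: real
  {
    assume "\<bar>t1 - t2\<bar> + \<bar>s1 - s2\<bar> \<le> 1"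
    then have "max 0 (t1 - m2) - max 0 (t2 - m2) \<le> 1"
      using abs_ge_self[of "t1 - t2"] abs_ge_zero[of "s1 - s2"] by linarith
    from mult_diff_le[OF _ this, of b]
    show "potential_right b m2 t1 - potential_right b m2 t2 \<le> b"
      using assms unfolding potential_right_def by simp
  next
    assume "fast_step m1 m2 m3 t1 s1 t2 s2"
    then have "t1 \<le> m2" "t2 \<le> m2" using assms(3) unfolding fast_step_def by auto
    then show "potential_right b m2 t1 - potential_right b m2 t2 \<le> c"
      using assms(1) unfolding potential_right_def by simp
  }
qed

lemma routes_slow_step:
  assumes "0 \<le> c" "c \<le> b" "\<bar>t1 - t2\<bar> + \<bar>s1 - s2\<bar> \<le> 1"
  shows "route_direct b t1 s1 - route_direct b t2 s2 \<le> b"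
    and "route_face b c m2 t1 s1 - route_face b c m2 t2 s2 \<le> b"
    and "route_ray b c m1 m2 m3 t1 s1 - route_ray b c m1 m2 m3 t2 s2 \<le> b"
proof -
  define dt ds where "dt = \<bar>t1 - t2\<bar>" and "ds = \<bar>s1 - s2\<bar>"
  have "dt \<ge> 0" "ds \<ge> 0" unfolding dt_def ds_def by simp_all
  have bb: "b * dt + b * ds \<le> b"
    using mult_left_mono[OF assms(3), of b] assms(1,2) by (simp add: dt_def ds_def distrib_left)
  have cb: "c * ds \<le> b * ds" "c * dt \<le> b * dt"
    using assms(2) \<open>dt \<ge> 0\<close> \<open>ds \<ge> 0\<close> by (simp_all add: mult_right_mono)
  have b0: "0 \<le> b" using assms by simp
  have t: "\<bar>t1\<bar> - \<bar>t2\<bar> \<le> dt" "\<bar>t1 - m2\<bar> - \<bar>t2 - m2\<bar> \<le> dt" "t2 - t1 \<le> dt"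
    and s: "s1 - s2 \<le> ds" "s2 - s1 \<le> ds"
    unfolding dt_def ds_def by linarith+
  have "b * (\<bar>t1\<bar> + s1) - b * (\<bar>t2\<bar> + s2) \<le> b * (dt + ds)"
    using t(1) s(1) by (intro mult_diff_le[OF b0]) simp
  then show "route_direct b t1 s1 - route_direct b t2 s2 \<le> b"
    unfolding route_direct_def using bb by (simp add: distrib_left)
  have "c * s1 - c * s2 \<le> c * ds" "b * \<bar>t1 - m2\<bar> - b * \<bar>t2 - m2\<bar> \<le> b * dt"
    using mult_diff_le[OF assms(1) s(1)] mult_diff_le[OF b0 t(2)] .
  then show "route_face b c m2 t1 s1 - route_face b c m2 t2 s2 \<le> b"
    unfolding route_face_def using bb cb by linarith
  have "(b - c) * max 0 (- m1 - t1) - (b - c) * max 0 (- m1 - t2) \<le> (b - c) * dt"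
    using assms(2) t(3) \<open>dt \<ge> 0\<close> by (intro mult_diff_le) linarith+
  moreover have "c * s1 - c * s2 \<le> c * ds" "c * s2 - c * s1 \<le> c * ds"
    using mult_diff_le[OF assms(1) s(1)] mult_diff_le[OF assms(1) s(2)] .
  ultimately have "min (c * s1) ((b - c) * max 0 (- m1 - t1) - c * s1)
      - min (c * s2) ((b - c) * max 0 (- m1 - t2) - c * s2) \<le> (b - c) * dt + c * ds"
    using assms(1,2) \<open>dt \<ge> 0\<close> \<open>ds \<ge> 0\<close> by (intro min_diff_le) (auto intro: add_increasing)
  moreover have "c * (m2 + 2 * m3 - t1) - c * (m2 + 2 * m3 - t2) \<le> c * dt"
    using mult_diff_le[OF assms(1)] t(3) by simp
  ultimately show "route_ray b c m1 m2 m3 t1 s1 - route_ray b c m1 m2 m3 t2 s2 \<le> b"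
    unfolding route_ray_def using bb cb by (simp add: algebra_simps)
qed

lemma potential_left_on_left_face:
  assumes "0 \<le> c" "c \<le> b" "0 \<le> m1" "0 \<le> m2" "0 \<le> s"
    and "c * (m1 + m2 + 2 * m3) + b * m2 \<le> b * m1"
  shows "potential_left b c m1 m2 m3 (- m1) s = c * (m1 + m2 + 2 * m3) + b * m2 - c * s"
proof -
  have "0 \<le> c * s" "0 \<le> b * s" "0 \<le> b * m2" using assms(1-5) by simp_all
  then have "route_ray b c m1 m2 m3 (- m1) s = c * (m1 + m2 + 2 * m3) + b * m2 - c * s"
    "route_direct b (- m1) s = b * m1 + b * s" "route_face b c m2 (- m1) s = b * m2 + c * s + b * m1 + b * m2"
    using assms(3,4) unfolding route_ray_def route_direct_def route_face_def
    by (simp_all add: algebra_simps min_def)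
  then show ?thesis
    unfolding potential_left_def using assms(6) \<open>0 \<le> c * s\<close> \<open>0 \<le> b * s\<close> \<open>0 \<le> b * m2\<close> by simp
qed

lemma potential_left_on_top_face:
  assumes "0 \<le> c" "c \<le> b" "0 \<le> m3" "- m1 \<le> t" "t \<le> m2"
    and "c * (m2 + m3) + b * m2 \<le> b * m3"
  shows "potential_left b c m1 m2 m3 t m3 = c * (m2 + m3 - t) + b * m2"
proof -
  have "c * m2 - c * t \<le> b * m2 - b * t"
    using mult_right_mono[OF assms(2), of "m2 - t"] assms(5) by (simp add: algebra_simps)
  moreover have "- (c * t) \<le> b * \<bar>t\<bar>"
  proof -
    have "c * (- t) \<le> c * \<bar>t\<bar>" using assms(1) by (intro mult_left_mono) auto
    also have "\<dots> \<le> b * \<bar>t\<bar>" using assms(2) by (intro mult_right_mono) auto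
    finally show ?thesis by simp
  qed
  moreover have "0 \<le> c * m3" using assms(1,3) by simp
  ultimately have "route_ray b c m1 m2 m3 t m3 = c * m2 + c * m3 - c * t + b * m2"
    "route_direct b t m3 = b * \<bar>t\<bar> + b * m3" "route_face b c m2 t m3 = 2 * (b * m2) + c * m3 - b * t"
    using assms(4,5) unfolding route_ray_def route_direct_def route_face_def
    by (simp_all add: algebra_simps min_def)
  moreover have "c * m2 + c * m3 + b * m2 \<le> b * m3" using assms(6) by (simp add: algebra_simps)
  ultimately show ?thesis
    unfolding potential_left_def
    using \<open>c * m2 - c * t \<le> b * m2 - b * t\<close> \<open>- (c * t) \<le> b * \<bar>t\<bar>\<close> by (simp add: algebra_simps)
qed

lemma potential_left_on_ray:
  assumes "0 \<le> c" "c \<le> b" "0 \<le> m1" "0 \<le> m2" "t \<le> - m1"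
    and "c * (m1 + m2 + 2 * m3) + b * m2 \<le> b * m1"
  shows "potential_left b c m1 m2 m3 t 0 = c * (m2 + 2 * m3 - t) + b * m2"
proof -
  have "b * m1 - c * m1 \<le> c * t - b * t"
    using mult_left_mono[of m1 "- t" "b - c"] assms(2,5) by (simp add: algebra_simps)
  moreover have "0 \<le> b * m2" "0 \<le> (b - c) * (- m1 - t)" using assms by simp_all
  ultimately have "route_ray b c m1 m2 m3 t 0 = c * m2 + 2 * (c * m3) - c * t + b * m2"
    "route_direct b t 0 = - (b * t)" "route_face b c m2 t 0 = 2 * (b * m2) - b * t"
    using assms(3-5) unfolding route_ray_def route_direct_def route_face_def
    by (simp_all add: algebra_simps min_def)
  moreover have "c * m1 + c * m2 + 2 * (c * m3) + b * m2 \<le> b * m1" using assms(6) by (simp add: algebra_simps)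
  ultimately show ?thesis
    unfolding potential_left_def
    using \<open>b * m1 - c * m1 \<le> c * t - b * t\<close> \<open>0 \<le> b * m2\<close> by (simp add: algebra_simps)
qed

lemma potential_left_on_right_face:
  assumes "0 \<le> c" "c \<le> b" "0 \<le> m2" "0 \<le> s"
  shows "potential_left b c m1 m2 m3 m2 s = min (route_face b c m2 m2 s) (route_ray b c m1 m2 m3 m2 s)"
proof -
  have "c * s \<le> b * s" using assms by (simp add: mult_right_mono)
  then have "route_face b c m2 m2 s \<le> route_direct b m2 s"
    using assms(3) unfolding route_face_def route_direct_def by (simp add: algebra_simps)
  then show ?thesis unfolding potential_left_def by simp
qed

lemma routes_diff_same_t:
  assumes "0 \<le> c"
  shows "route_face b c m2 t s1 - route_face b c m2 t s2 \<le> c * \<bar>s1 - s2\<bar>"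
    and "route_ray b c m1 m2 m3 t s1 - route_ray b c m1 m2 m3 t s2 \<le> c * \<bar>s1 - s2\<bar>"
proof -
  have "c * s1 - c * s2 \<le> c * \<bar>s1 - s2\<bar>" "c * s2 - c * s1 \<le> c * \<bar>s1 - s2\<bar>"
    using mult_diff_le[OF assms, of s1 s2] mult_diff_le[OF assms, of s2 s1] by (simp_all add: abs_minus_commute)
  moreover from this have "min (c * s1) ((b - c) * max 0 (- m1 - t) - c * s1)
      - min (c * s2) ((b - c) * max 0 (- m1 - t) - c * s2) \<le> c * \<bar>s1 - s2\<bar>"
    by (intro min_diff_le) linarith+
  ultimately show "route_face b c m2 t s1 - route_face b c m2 t s2 \<le> c * \<bar>s1 - s2\<bar>"
    and "route_ray b c m1 m2 m3 t s1 - route_ray b c m1 m2 m3 t s2 \<le> c * \<bar>s1 - s2\<bar>"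
    unfolding route_face_def route_ray_def by simp_all
qed

lemma potential_left_fast_step:
  assumes "0 \<le> c" "c \<le> b" "0 \<le> m1" "0 \<le> m2" "0 \<le> m3"
    and "c * (m1 + m2 + 2 * m3) + b * m2 \<le> b * m1" "c * (m2 + m3) + b * m2 \<le> b * m3"
    and "fast_step m1 m2 m3 t1 s1 t2 s2"
  shows "potential_left b c m1 m2 m3 t1 s1 - potential_left b c m1 m2 m3 t2 s2 \<le> c"
proof -
  consider
      (left) "t1 = - m1" "t2 = - m1" "\<bar>s1 - s2\<bar> \<le> 1" "0 \<le> s1" "0 \<le> s2"
    | (right) "t1 = m2" "t2 = m2" "\<bar>s1 - s2\<bar> \<le> 1" "0 \<le> s1" "0 \<le> s2"
    | (top) "s1 = m3" "s2 = m3" "\<bar>t1 - t2\<bar> \<le> 1" "- m1 \<le> t1" "t1 \<le> m2" "- m1 \<le> t2" "t2 \<le> m2"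
    | (ray) "s1 = 0" "s2 = 0" "\<bar>t1 - t2\<bar> \<le> 1" "t1 \<le> - m1" "t2 \<le> - m1"
    using assms(8) unfolding fast_step_def by blast
  then show ?thesis
  proof cases
    case left
    have "c * s2 - c * s1 \<le> c * 1" using left(3) by (intro mult_diff_le[OF assms(1)]) linarith
    then show ?thesis
      unfolding left(1,2) using potential_left_on_left_face[OF assms(1-4) _ assms(6)] left(4,5) by simp
  next
    case right
    then have "potential_left b c m1 m2 m3 t1 s1 - potential_left b c m1 m2 m3 t2 s2 \<le> c * \<bar>s1 - s2\<bar>"
      using routes_diff_same_t[OF assms(1)] min_diff_le
      by (simp add: potential_left_on_right_face[OF assms(1,2,4)])
    moreover have "c * \<bar>s1 - s2\<bar> \<le> c * 1" using right(3) assms(1) by (rule mult_left_mono)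
    ultimately show ?thesis by simp
  next
    case top
    have "c * (m2 + m3 - t1) - c * (m2 + m3 - t2) \<le> c * 1"
      using top(3) by (intro mult_diff_le[OF assms(1)]) linarith
    then show ?thesis
      unfolding top(1,2) using potential_left_on_top_face[OF assms(1,2,5) _ _ assms(7)] top(4-7) by simp
  next
    case ray
    have "c * (m2 + 2 * m3 - t1) - c * (m2 + 2 * m3 - t2) \<le> c * 1"
      using ray(3) by (intro mult_diff_le[OF assms(1)]) linarith
    then show ?thesis
      unfolding ray(1,2) using potential_left_on_ray[OF assms(1-4) _ assms(6)] ray(4,5) by simp
  qed
qed

lemma admissible_potential_left:
  assumes "0 \<le> c" "c \<le> b" "0 \<le> m1" "0 \<le> m2" "0 \<le> m3"
    and "c * (m1 + m2 + 2 * m3) + b * m2 \<le> b * m1" "c * (m2 + m3) + b * m2 \<le> b * m3"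
  shows "admissible_potential b c m1 m2 m3 (potential_left b c m1 m2 m3)"
  unfolding admissible_potential_def
proof (intro conjI allI impI)
  fix t1 s1 t2 s2 :: real
  assume "\<bar>t1 - t2\<bar> + \<bar>s1 - s2\<bar> \<le> 1"
  from routes_slow_step[OF assms(1,2) this]
  show "potential_left b c m1 m2 m3 t1 s1 - potential_left b c m1 m2 m3 t2 s2 \<le> b"
    unfolding potential_left_def by (simp add: min_diff_le)
qed (rule potential_left_fast_step[OF assms])

definition lower_potential :: "real \<Rightarrow> real \<Rightarrow> real \<Rightarrow> real \<Rightarrow> real \<Rightarrow> real \<Rightarrow> real \<Rightarrow> real" where
  "lower_potential b c m1 m2 m3 t s =
     max (potential_off_axis b c (m1 + m3) t s) (max (potential_right b m2 t) (potential_left b c m1 m2 m3 t s))"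

lemma admissible_lower_potential:
  assumes "0 \<le> c" "c \<le> b" "0 \<le> m2" "m2 \<le> m1" "0 \<le> m3"
    and "c * (m1 + m2 + 2 * m3) + b * m2 \<le> b * m1" "c * (m2 + m3) + b * m2 \<le> b * m3"
  shows "admissible_potential b c m1 m2 m3 (lower_potential b c m1 m2 m3)"
  unfolding lower_potential_def using assms
  by (intro admissible_potential_max admissible_potential_off_axis admissible_potential_right
      admissible_potential_left) auto

lemma lower_potential_origin:
  assumes "0 \<le> c" "0 \<le> m2" "0 \<le> m1 + m3"
  shows "lower_potential b c m1 m2 m3 0 0 \<le> 0"
  using assms
  unfolding lower_potential_def potential_off_axis_def potential_right_def potential_left_def route_direct_def
  by simp

context
  fixes a b c N m1 m2 m3 :: real
  assumes costs: "0 < a" "a < b" "0 \<le> c" "c \<le> a" "1 \<le> m2"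
    and scales: "2 * m2 \<le> m3" "2 * m3 \<le> m1" "2 * m1 \<le> N"
    and box_margin: "c * (m1 + m2 + 2 * m3) + b * m2 \<le> b * m1"
    and sphere_margin: "(2 * b + 3 * a) * m1 \<le> (b - c) * N"
begin

lemma scales_times_costs:
  "2 * (b * m3) \<le> b * m1" "2 * (b * m2) \<le> b * m3" "2 * (a * m3) \<le> a * m1" "2 * (a * m2) \<le> a * m3"
  "c * m1 \<le> a * m1" "c * m2 \<le> a * m2" "c * m3 \<le> a * m3"
  "0 \<le> c * m1" "0 \<le> c * m2" "0 \<le> c * m3" "0 \<le> b * m1" "0 \<le> b * m2" "0 \<le> a * m1"
  using costs scales mult_left_mono[OF scales(1), of b] mult_left_mono[OF scales(2), of b]
    mult_left_mono[OF scales(2), of a] mult_left_mono[OF scales(1), of a]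
    mult_right_mono[of c a m1] mult_right_mono[of c a m2] mult_right_mono[of c a m3] by auto

lemma box_margin_expanded: "c * m1 + c * m2 + 2 * (c * m3) + b * m2 \<le> b * m1"
  using box_margin by (simp add: algebra_simps)

lemma sphere_margin_expanded: "2 * (b * m1) + 3 * (a * m1) \<le> b * N - c * N"
  using sphere_margin by (simp add: algebra_simps)

lemma sphere_target_expanded: "c * (N + 2 * m3) + b * m2 = c * N + 2 * (c * m3) + b * m2"
  by (simp add: algebra_simps)

lemma potential_off_axis_ge:
  assumes "m1 \<le> s" "\<bar>t\<bar> + s = N"
  shows "c * (N + 2 * m3) + b * m2 \<le> potential_off_axis b c (m1 + m3) t s"
proof -
  have "c * (\<bar>t\<bar> + s) = c * N" using assms(2) by simp
  show ?thesis
  proof (cases "s \<le> N - m1 - m3")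
    case True
    then have excess: "min s (max 0 (\<bar>t\<bar> + s - (m1 + m3))) = s" using assms by auto
    have "b * m1 - c * m1 \<le> (b - c) * s"
      using mult_left_mono[OF assms(1), of "b - c"] costs by (simp add: algebra_simps)
    then show ?thesis
      unfolding potential_off_axis_def sphere_target_expanded \<open>c * (\<bar>t\<bar> + s) = c * N\<close> excess
      using box_margin_expanded scales_times_costs by linarith
  next
    case False
    then have excess: "min s (max 0 (\<bar>t\<bar> + s - (m1 + m3))) = N - m1 - m3" using assms scales by auto
    have "(b - c) * (N - m1 - m3) = b * N - c * N - b * m1 - b * m3 + c * m1 + c * m3"
      by (simp add: algebra_simps)
    then show ?thesis
      unfolding potential_off_axis_def sphere_target_expanded \<open>c * (\<bar>t\<bar> + s) = c * N\<close> excess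
      using sphere_margin_expanded scales_times_costs by linarith
  qed
qed

lemma potential_right_ge:
  assumes "0 \<le> s" "s \<le> m1" "t = N - s"
  shows "c * (N + 2 * m3) + b * m2 \<le> potential_right b m2 t"
proof -
  have "max 0 (t - m2) = N - s - m2" using assms scales costs by auto
  then have "potential_right b m2 t = b * N - b * s - b * m2"
    unfolding potential_right_def by (simp only:) (simp add: algebra_simps)
  moreover have "b * s \<le> b * m1" using assms costs by (intro mult_left_mono) auto
  ultimately show ?thesis
    unfolding sphere_target_expanded using sphere_margin_expanded scales_times_costs by linarith
qed

lemma potential_left_ge:
  assumes "0 \<le> s" "s \<le> m1" "t = - (N - s)"
  shows "c * (N + 2 * m3) + b * m2 \<le> potential_left b c m1 m2 m3 t s"
proof -
  have bs: "b * s \<le> b * m1" "c * s \<le> c * m1" "0 \<le> c * s"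
    using assms costs by (auto intro: mult_left_mono)
  have "\<bar>t\<bar> = N - s" "\<bar>t - m2\<bar> = N - s + m2" "max 0 (- m1 - t) = N - s - m1"
    using assms scales costs by auto
  then have "route_direct b t s = b * N"
    and "route_face b c m2 t s = 2 * (b * m2) + c * s + b * N - b * s"
    and "(b - c) * max 0 (- m1 - t) = b * N - b * s - b * m1 - c * N + c * s + c * m1"
    unfolding route_direct_def route_face_def by (simp_all only:) (simp_all add: algebra_simps)
  moreover have "route_ray b c m1 m2 m3 t s = c * N + 2 * (c * m3) + c * m2 + b * m2"
    if "c * s \<le> (b - c) * max 0 (- m1 - t) - c * s"
  proof -
    have min_eq: "min (c * s) ((b - c) * max 0 (- m1 - t) - c * s) = c * s" using that by simp
    show ?thesis unfolding route_ray_def min_eq unfolding assms(3) by (simp add: algebra_simps)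
  qed
  ultimately show ?thesis
    unfolding potential_left_def sphere_target_expanded using sphere_margin_expanded scales_times_costs bs by simp
qed

lemma lower_potential_ge_on_sphere:
  assumes "0 \<le> s" "\<bar>t\<bar> + s = N"
  shows "c * (N + 2 * m3) + b * m2 \<le> lower_potential b c m1 m2 m3 t s"
proof -
  consider "m1 \<le> s" | "s < m1" "0 < t" | "s < m1" "t \<le> 0" by linarith
  then show ?thesis
  proof cases
    case 1
    then show ?thesis
      using potential_off_axis_ge[OF 1 assms(2)] unfolding lower_potential_def by simp
  next
    case 2
    then have "t = N - s" using assms(2) by simp
    then show ?thesis
      using potential_right_ge[OF assms(1) less_imp_le[OF 2(1)]]
      unfolding lower_potential_def by simp
  next
    case 3
    then have "t = - (N - s)" using assms(2) by simp
    then show ?thesis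
      using potential_left_ge[OF assms(1) less_imp_le[OF 3(1)]]
      unfolding lower_potential_def by simp
  qed
qed

end

lemma path_to_origin_exists:
  assumes "x \<in> Zd d" "norm1 d x \<le> n"
  shows "\<exists>p. is_path_in d (Lambda d n) x (\<lambda>_. 0) p"
proof -
  have "(\<lambda>_. 0) \<in> Zd d" unfolding Zd_def by simp
  then obtain p where p: "is_path_in d (lattice_box d x (\<lambda>_. 0)) x (\<lambda>_. 0) p"
    using monotone_path_exists[OF assms(1)] by blast
  have "lattice_box d x (\<lambda>_. 0) \<subseteq> Lambda d n"
  proof
    fix z assume z: "z \<in> lattice_box d x (\<lambda>_. 0)"
    have "norm1 d z \<le> norm1 d x"
      unfolding norm1_def using lattice_box_abs_le[OF z] by (intro sum_mono) simp
    then show "z \<in> Lambda d n" using z assms(2) unfolding lattice_box_def Lambda_def by auto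
  qed
  then show ?thesis using is_path_in_mono[OF p] by blast
qed

lemma passage_time_from_sphere_ge:
  fixes a b c :: real and n m1 m2 m3 :: int
  assumes "2 \<le> d" "event_E d a b \<delta> n m1 m2 m3 \<tau>" "\<forall>e \<in> edges d. \<tau> e \<ge> 0"
    and "0 < a" "a < b" "0 \<le> c" "c \<le> a" "c \<le> max (a - \<delta>) 0" "1 \<le> m2"
    and "2 * m2 \<le> m3" "2 * m3 \<le> m1" "2 * m1 \<le> n"
    and "c * (m1 + m2 + 2 * m3) + b * m2 \<le> b * m1" "c * (m2 + m3) + b * m2 \<le> b * m3"
    and "(2 * b + 3 * a) * m1 \<le> (b - c) * n"
    and "x \<in> Zd d" "norm1 d x = n"
  shows "c * (n + 2 * m3) + b * m2 \<le> passage_time d \<tau> (Lambda d n) x (\<lambda>_. 0)"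
proof -
  let ?\<Phi> = "lower_potential b c m1 m2 m3"
  have scales: "2 * real_of_int m2 \<le> of_int m3" "2 * real_of_int m3 \<le> of_int m1"
    "2 * real_of_int m1 \<le> of_int n" "1 \<le> real_of_int m2"
    using assms(9-12) by simp_all
  have margins: "c * (real_of_int m1 + of_int m2 + 2 * of_int m3) + b * of_int m2 \<le> b * of_int m1"
    "c * (real_of_int m2 + of_int m3) + b * of_int m2 \<le> b * of_int m3"
    using assms(13,14) by simp_all
  have adm: "admissible_potential b c m1 m2 m3 ?\<Phi>"
    using assms(5-7) margins scales by (intro admissible_lower_potential) auto
  have "\<bar>x 0\<bar> + transverse_norm d x = n"
    using norm1_eq_abs_plus_transverse_norm[of d x] assms(1,17) by simp
  then have "\<bar>real_of_int (x 0)\<bar> + real_of_int (transverse_norm d x) = real_of_int n"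
    by (metis of_int_abs of_int_add)
  then have sphere: "c * (n + 2 * m3) + b * m2 \<le> ?\<Phi> (x 0) (transverse_norm d x)"
    using lower_potential_ge_on_sphere[OF assms(4-7) scales(4,1-3) margins(1) assms(15)]
      transverse_norm_nonneg[of d x] by simp
  have origin: "?\<Phi> 0 0 \<le> 0"
    using scales assms(6) by (intro lower_potential_origin) auto
  have "transverse_norm d (\<lambda>_. 0) = 0" unfolding transverse_norm_def by simp
  have "1 \<le> m1" using assms(9-11) by simp
  obtain p where "is_path_in d (Lambda d n) x (\<lambda>_. 0) p"
    using path_to_origin_exists[OF assms(16)] assms(17) by auto
  then show ?thesis
  proof (rule passage_time_ge)
    fix q assume "is_path_in d (Lambda d n) x (\<lambda>_. 0) q"
    from potential_diff_le_path_weight[OF assms(1-3,8) \<open>1 \<le> m1\<close> assms(9) adm this]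
    have "?\<Phi> (x 0) (transverse_norm d x) - ?\<Phi> 0 0 \<le> path_weight \<tau> q"
      using \<open>transverse_norm d (\<lambda>_. 0) = 0\<close> by simp
    then show "c * (n + 2 * m3) + b * m2 \<le> path_weight \<tau> q" using sphere origin by linarith
  qed
qed

lemma epsilon_bounds:
  fixes a b \<epsilon> m2 m3 :: real
  assumes "0 < a" "a < b" "\<epsilon> < (b - a) / (2 * b + 3 * a)" "1 \<le> m2" "m2 \<le> \<epsilon> * m3" "0 \<le> m3"
  shows "0 < \<epsilon>" "\<epsilon> < 1 / 2" "\<epsilon> * (2 * b + 3 * a) < b - a"
proof -
  show "\<epsilon> * (2 * b + 3 * a) < b - a"
    using assms(1-3) by (simp add: pos_less_divide_eq)
  show "0 < \<epsilon>"
  proof (rule ccontr)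
    assume "\<not> 0 < \<epsilon>"
    then have "\<epsilon> * m3 \<le> 0" using assms(6) by (simp add: mult_nonpos_nonneg)
    then show False using assms(4,5) by simp
  qed
  have "(1 / 2) * (2 * b + 3 * a) = b + (3 / 2) * a" by (simp add: algebra_simps)
  then show "\<epsilon> < 1 / 2"
    using \<open>\<epsilon> * (2 * b + 3 * a) < b - a\<close> assms(1,2) mult_right_mono[of "1 / 2" \<epsilon> "2 * b + 3 * a"]
    by linarith
qed

lemma scale_separation:
  fixes \<epsilon> N m1 m2 m3 :: real
  assumes "0 < \<epsilon>" "\<epsilon> < 1 / 2" "1 \<le> m2" "m2 \<le> \<epsilon> * m3" "\<epsilon> * m3 \<le> \<epsilon>^2 * m1" "\<epsilon>^2 * m1 \<le> \<epsilon>^3 * N"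
  shows "m3 \<le> \<epsilon> * m1" "m1 \<le> \<epsilon> * N" "2 * m2 \<le> m3" "2 * m3 \<le> m1" "2 * m1 \<le> N"
proof -
  show m3: "m3 \<le> \<epsilon> * m1"
    using assms(1,5) by (simp add: power2_eq_square mult.assoc)
  show m1: "m1 \<le> \<epsilon> * N"
    using assms(1,6) by (simp add: power2_eq_square power3_eq_cube mult.assoc)
  have half: "\<epsilon> * X \<le> X / 2" if "0 \<le> X" for X
    using mult_right_mono[of \<epsilon> "1 / 2" X] assms(2) that by simp
  have nonneg: "0 \<le> Y" if "0 \<le> X" "X \<le> \<epsilon> * Y" for X Y
  proof -
    have "0 \<le> \<epsilon> * Y" using that by linarith
    then show ?thesis using assms(1) by (simp add: zero_le_mult_iff)
  qed
  have "0 \<le> m3" using nonneg[OF _ assms(4)] assms(3) by simp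
  then show "2 * m2 \<le> m3" using half[of m3] assms(4) by linarith
  have "0 \<le> m1" using nonneg[OF \<open>0 \<le> m3\<close> m3] .
  then show "2 * m3 \<le> m1" using half[of m1] m3 by linarith
  have "0 \<le> N" using nonneg[OF \<open>0 \<le> m1\<close> m1] .
  then show "2 * m1 \<le> N" using half[of N] m1 by linarith
qed

lemma cost_inequalities:
  fixes a b c \<epsilon> N m1 m2 m3 :: real
  assumes "0 < a" "a < b" "0 \<le> c" "c \<le> a" "0 < \<epsilon>" "\<epsilon> * (2 * b + 3 * a) < b - a"
    and "1 \<le> m2" "m2 \<le> \<epsilon> * m3" "m3 \<le> \<epsilon> * m1" "m1 \<le> \<epsilon> * N"
    and "2 * m2 \<le> m3" "2 * m3 \<le> m1" "2 * m1 \<le> N"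
  shows "c * (m1 + m2 + 2 * m3) + b * m2 \<le> b * m1" "c * (m2 + m3) + b * m2 \<le> b * m3"
    and "(2 * b + 3 * a) * m1 \<le> (b - c) * N"
proof -
  have small: "k * \<epsilon> \<le> b - a" if "0 \<le> k" "k \<le> 2 * b + 3 * a" for k
    using mult_right_mono[OF that(2), of \<epsilon>] mult.commute[of \<epsilon> "2 * b + 3 * a"] assms(5,6)
    by linarith
  have ba: "b - a \<le> b - c" using assms(4) by simp
  have "(b + c) * m2 \<le> (b + a) * m2" using assms by (intro mult_right_mono) auto
  also have "\<dots> \<le> (b + a) * (\<epsilon> * m3)" using assms by (intro mult_left_mono) auto
  also have "\<dots> = ((b + a) * \<epsilon>) * m3" by simp
  also have "\<dots> \<le> (b - c) * m3"
    using small[of "b + a"] ba assms by (intro mult_right_mono) auto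
  finally show "c * (m2 + m3) + b * m2 \<le> b * m3" by (simp add: algebra_simps)
  have "c * (m2 + 2 * m3) + b * m2 \<le> a * (m2 + 2 * m3) + b * m2"
    using assms by (intro add_right_mono mult_right_mono) auto
  also have "\<dots> \<le> a * (3 * m3) + b * m3" using assms by (intro add_mono mult_left_mono) auto
  also have "\<dots> = (3 * a + b) * m3" by (simp add: algebra_simps)
  also have "\<dots> \<le> (3 * a + b) * (\<epsilon> * m1)" using assms by (intro mult_left_mono) auto
  also have "\<dots> = ((3 * a + b) * \<epsilon>) * m1" by simp
  also have "\<dots> \<le> (b - c) * m1"
    using small[of "3 * a + b"] ba assms by (intro mult_right_mono) auto
  finally show "c * (m1 + m2 + 2 * m3) + b * m2 \<le> b * m1" by (simp add: algebra_simps)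
  have "(2 * b + 3 * a) * m1 \<le> (2 * b + 3 * a) * (\<epsilon> * N)" using assms by (intro mult_left_mono) auto
  also have "\<dots> = (\<epsilon> * (2 * b + 3 * a)) * N" by simp
  also have "\<dots> \<le> (b - c) * N"
    using assms ba by (intro mult_right_mono) auto
  finally show "(2 * b + 3 * a) * m1 \<le> (b - c) * N" .
qed

theorem lemma1:
  fixes d :: nat and a b \<epsilon> \<delta> :: real and n m1 m2 m3 :: int
    and \<tau> :: "pt set \<Rightarrow> real"
  assumes "d \<ge> 2"
    and "\<forall>e \<in> edges d. \<tau> e \<ge> 0"
    and "0 < a" and "a < b"
    and "\<epsilon> < (b - a) / (2 * b + 3 * a)"
    and "n \<ge> 1" and "m1 \<ge> 1" and "m2 \<ge> 1" and "m3 \<ge> 1"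
    and "1 \<le> m2" and "m2 \<le> \<epsilon> * m3" and "\<epsilon> * m3 \<le> \<epsilon>^2 * m1"
    and "\<epsilon>^2 * m1 \<le> \<epsilon>^3 * n"
    and "\<delta> > 0"
    and "event_E d a b \<delta> n m1 m2 m3 \<tau>"
  shows "(\<forall>y \<in> Rhat d m1 m2 m3.
            passage_time d \<tau> (Lambda d n) (\<lambda>i. - n * unitv 0 i) y \<le> a * (n + 2 * m3) + a * m2)
       \<and> (\<forall>x \<in> Zd d. norm1 d x = n \<longrightarrow>
            passage_time d \<tau> (Lambda d n) x (\<lambda>i. 0) \<ge> (a - \<delta>) * (n + 2 * m3) + b * m2)"
proof -
  \<comment> \<open>Fast edges weigh at least \<open>a - \<delta>\<close> and at least 0; the potentials need \<open>c \<ge> 0\<close>.\<close>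
  define c where "c = max (a - \<delta>) 0"
  have c: "0 \<le> c" "c \<le> a" "c \<le> max (a - \<delta>) 0" "a - \<delta> \<le> c" using assms(3,14) unfolding c_def by auto
  have m: "1 \<le> real_of_int m2" "0 \<le> real_of_int m3" using assms(8,9) by simp_all
  have \<epsilon>: "0 < \<epsilon>" "\<epsilon> < 1 / 2" "\<epsilon> * (2 * b + 3 * a) < b - a"
    using epsilon_bounds[OF assms(3-5) m(1) assms(11) m(2)] by simp_all
  note scales = scale_separation[OF \<epsilon>(1,2) m(1) assms(11-13)]
  note costs = cost_inequalities[OF assms(3,4) c(1,2) \<epsilon>(1,3) m(1) assms(11) scales]
  have "real_of_int (2 * m2) \<le> of_int m3" "real_of_int (2 * m3) \<le> of_int m1" "real_of_int (2 * m1) \<le> of_int n"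
    using scales(3-5) by simp_all
  then have int_scales: "2 * m2 \<le> m3" "2 * m3 \<le> m1" "2 * m1 \<le> n" by (simp_all only: of_int_le_iff)
  show ?thesis
  proof (intro conjI ballI impI)
    fix y assume "y \<in> Rhat d m1 m2 m3"
    then show "passage_time d \<tau> (Lambda d n) (\<lambda>i. - n * unitv 0 i) y \<le> a * (n + 2 * m3) + a * m2"
      using int_scales assms(3,9) by (intro passage_time_to_Rhat_le[OF assms(1,2) _ _ _ _ assms(15)]) auto
  next
    fix x assume "x \<in> Zd d" "norm1 d x = n"
    from passage_time_from_sphere_ge[OF assms(1,15,2,3,4) c(1-3) assms(10) int_scales _ _ _ this]
    have "c * (n + 2 * m3) + b * m2 \<le> passage_time d \<tau> (Lambda d n) x (\<lambda>i. 0)"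
      using costs by simp
    moreover have "(a - \<delta>) * (n + 2 * m3) \<le> c * (n + 2 * m3)"
      using c(4) assms(6,9) by (intro mult_right_mono) auto
    ultimately show "(a - \<delta>) * (n + 2 * m3) + b * m2 \<le> passage_time d \<tau> (Lambda d n) x (\<lambda>i. 0)"
      by linarith
  qed
qed

end
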